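(* Let $K,T\subset\mathbb{R}^n$ be convex bodies with $T$ strictly convex and smooth. Let $q=(q_1,\dots,q_m)$ be a closed $(K,T)$-Minkowski billiard trajectory with closed dual billiard trajectory $p=(p_1,\dots,p_m)$ in $T$. Then $p$ is a closed polygonal curve (satisfying $p_j\neq p_{j+1}$ and $p_j\notin[p_{j-1},p_{j+1}]$ for all $j$) and is a closed $(T,-K)$-Minkowski billiard trajectory having $-q^{+1}:=(-q_2,\dots,-q_m,-q_1)$ as a closed dual billiard trajectory on $-K$.
   Context: A convex body is a compact convex set in $\mathbb{R}^n$ containing the origin in its interior; it is smooth if through each boundary point there is a unique supporting hyperplane. For a convex set $C$ and $z\in\partial C$, $N_C(z)=\{v:\langle v,y-z\rangle\le 0\ \forall y\in C\}$. A closed polygonal curve $(q_1,\dots,q_m)$, $m\ge2$, always satisfies $q_j\ne q_{j+1}$ and $q_j\notin[q_{j-1},q_{j+1}]$ (indices mod $m$). For convex bodies $A,B$, a closed polygonal curve $q$ with vertices on $\partial A$ is a closed $(A,B)$-Minkowski billiard trajectory if there are $p_1,\dots,p_m\in\partial B$ with $q_{j+1}-q_j\in N_B(p_j)$ and $p_{j+1}-p_j\in -N_A(q_{j+1})$ for all $j$; $p=(p_1,\dots,p_m)$ is called a closed dual billiard trajectory in $B$. *)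

theory Defs
  imports "HOL-Analysis.Analysis"
begin

definition convex_body :: "'a::euclidean_space set \<Rightarrow> bool" where
  "convex_body C \<longleftrightarrow> compact C \<and> convex C \<and> 0 \<in> interior C"

definition normal_cone :: "'a::euclidean_space set \<Rightarrow> 'a \<Rightarrow> 'a set" where
  "normal_cone C z = {v. \<forall>y\<in>C. inner v (y - z) \<le> 0}"

definition supporting_hyperplane :: "'a::euclidean_space set \<Rightarrow> 'a \<Rightarrow> 'a set \<Rightarrow> bool" where
  "supporting_hyperplane C z H \<longleftrightarrow>
     (\<exists>v c. v \<noteq> 0 \<and> H = {x. inner v x = c} \<and> inner v z = c \<and> (\<forall>y\<in>C. inner v y \<le> c))"

definition smooth_body :: "'a::euclidean_space set \<Rightarrow> bool" where
  "smooth_body C \<longleftrightarrow> (\<forall>z\<in>frontier C. \<exists>!H. supporting_hyperplane C z H)"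

definition strictly_convex :: "'a::euclidean_space set \<Rightarrow> bool" where
  "strictly_convex C \<longleftrightarrow> convex C \<and>
     (\<forall>x\<in>C. \<forall>y\<in>C. \<forall>t::real. x \<noteq> y \<and> 0 < t \<and> t < 1 \<longrightarrow> (1 - t) *\<^sub>R x + t *\<^sub>R y \<in> interior C)"

definition closed_polygonal :: "nat \<Rightarrow> (nat \<Rightarrow> 'a::euclidean_space) \<Rightarrow> bool" where
  "closed_polygonal m q \<longleftrightarrow> 2 \<le> m \<and>
     (\<forall>j<m. q j \<noteq> q ((j + 1) mod m) \<and>
            q j \<notin> closed_segment (q ((j + m - 1) mod m)) (q ((j + 1) mod m)))"

definition minkowski_billiard ::
  "'a::euclidean_space set \<Rightarrow> 'a set \<Rightarrow> nat \<Rightarrow> (nat \<Rightarrow> 'a) \<Rightarrow> (nat \<Rightarrow> 'a) \<Rightarrow> bool" where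
  "minkowski_billiard A B m q p \<longleftrightarrow> closed_polygonal m q \<and>
     (\<forall>j<m. q j \<in> frontier A \<and> p j \<in> frontier B \<and>
        q ((j + 1) mod m) - q j \<in> normal_cone B (p j) \<and>
        p ((j + 1) mod m) - p j \<in> uminus ` normal_cone A (q ((j + 1) mod m)))"

end

theory Submission
  imports Defs
begin

text \<open>
  Consecutive edges q(j+1) - q j and q(j+2) - q(j+1) are normal to T at p j and p(j+1).
  If p j = p(j+1), smoothness of T makes both edges positive multiples of one another, so
  q(j+1) would lie on the segment between its neighbours; hence consecutive points of p
  differ. Strict convexity then keeps each boundary point p j off the segment between its
  neighbours, so p is a closed polygonal curve. The billiard conditions for (T, -K) are the
  conditions for (K, T) read backwards, since reflecting K in the origin negates its
  frontier and normal cones.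
\<close>

lemma frontier_negations:
  fixes S :: "'a::euclidean_space set"
  shows "frontier (uminus ` S) = uminus ` frontier S"
proof -
  have "closure (uminus ` S) = uminus ` closure S"
    by (rule closure_injective_linear_image[OF linear_uminus, symmetric]) (simp add: inj_def)
  then show ?thesis
    unfolding frontier_def interior_negations by (auto simp: image_iff)
qed

lemma normal_cone_negations:
  "normal_cone (uminus ` C) (- z) = uminus ` normal_cone C z"
proof -
  have "v \<in> normal_cone (uminus ` C) (- z) \<longleftrightarrow> - v \<in> normal_cone C z" for v
    unfolding normal_cone_def by (auto simp: inner_diff_right)
  then show ?thesis
    by (force intro: image_eqI[where x = "- _"])
qed

lemma normal_cone_scaleR:
  assumes "v \<in> normal_cone C z" "0 \<le> c"
  shows "c *\<^sub>R v \<in> normal_cone C z"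
  using assms unfolding normal_cone_def by (auto intro: mult_nonneg_nonpos)

lemma interior_empty_if_opposite_normals:
  assumes "v \<in> normal_cone C z" "- v \<in> normal_cone C z" "v \<noteq> 0"
  shows "interior C = {}"
proof -
  have "C \<subseteq> {x. v \<bullet> x = v \<bullet> z}"
  proof
    fix x assume "x \<in> C"
    then have "v \<bullet> (x - z) \<le> 0" "- v \<bullet> (x - z) \<le> 0"
      using assms(1,2) unfolding normal_cone_def by blast+
    then show "x \<in> {x. v \<bullet> x = v \<bullet> z}"
      by (simp add: inner_diff_right)
  qed
  then have "interior C \<subseteq> {}"
    using interior_mono interior_hyperplane[OF assms(3)] by blast
  then show ?thesis
    by blast
qed

lemma parallel_if_same_orthogonal_complement:
  fixes u w :: "'a::real_inner"
  assumes "w \<noteq> 0" and "\<And>y. w \<bullet> y = 0 \<Longrightarrow> u \<bullet> y = 0"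
  shows "u = (u \<bullet> w / (w \<bullet> w)) *\<^sub>R w"
proof -
  define d where "d = u - (u \<bullet> w / (w \<bullet> w)) *\<^sub>R w"
  have "w \<bullet> d = 0"
    using assms(1) unfolding d_def by (simp add: inner_diff_right inner_commute)
  with assms(2) have "d \<bullet> d = 0"
    by (simp add: d_def inner_diff_left)
  then show ?thesis
    unfolding d_def by simp
qed

lemma smooth_body_normal_cone_ray:
  fixes T :: "'a::euclidean_space set"
  assumes "smooth_body T" "interior T \<noteq> {}" "z \<in> frontier T"
    and u: "u \<in> normal_cone T z" "u \<noteq> 0" and w: "w \<in> normal_cone T z" "w \<noteq> 0"
  shows "\<exists>l>0. u = l *\<^sub>R w"
proof -
  have support: "supporting_hyperplane T z {x. v \<bullet> x = v \<bullet> z}"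
    if "v \<in> normal_cone T z" "v \<noteq> 0" for v
    using that unfolding supporting_hyperplane_def normal_cone_def
    by (intro exI[of _ v] exI[of _ "v \<bullet> z"]) (auto simp: inner_diff_right)
  have same: "{x. u \<bullet> x = u \<bullet> z} = {x. w \<bullet> x = w \<bullet> z}"
    using assms(1,3) support[OF u] support[OF w] unfolding smooth_body_def by blast
  have perp: "u \<bullet> y = 0" if "w \<bullet> y = 0" for y
  proof -
    have "z + y \<in> {x. w \<bullet> x = w \<bullet> z}"
      using that by (simp add: inner_add_right)
    then show ?thesis
      unfolding same[symmetric] by (simp add: inner_add_right)
  qed
  define l where "l = u \<bullet> w / (w \<bullet> w)"
  have ul: "u = l *\<^sub>R w"
    unfolding l_def by (rule parallel_if_same_orthogonal_complement[OF w(2) perp])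
  have "\<not> l < 0"
  proof
    assume "l < 0"
    then have "- w = (- 1 / l) *\<^sub>R u"
      using ul by simp
    then have "- w \<in> normal_cone T z"
      using normal_cone_scaleR[OF u(1), of "- 1 / l"] \<open>l < 0\<close> by simp
    then show False
      using interior_empty_if_opposite_normals[OF w(1) _ w(2)] assms(2) by blast
  qed
  moreover have "l \<noteq> 0"
    using ul u(2) by auto
  ultimately show ?thesis
    using ul by (intro exI[of _ l]) auto
qed

lemma in_closed_segment_if_continued:
  assumes "b - a = l *\<^sub>R (a - c)" "0 \<le> l"
  shows "a \<in> closed_segment c b"
proof -
  have scaled: "(1 + l) *\<^sub>R a = l *\<^sub>R c + b"
    using assms(1) by (simp add: algebra_simps)
  have "a = (1 / (1 + l)) *\<^sub>R ((1 + l) *\<^sub>R a)"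
    using assms(2) by simp
  also have "\<dots> = (1 / (1 + l)) *\<^sub>R (l *\<^sub>R c + b)"
    unfolding scaled ..
  also have "\<dots> = (1 - 1 / (1 + l)) *\<^sub>R c + (1 / (1 + l)) *\<^sub>R b"
    using assms(2) by (simp add: scaleR_right_distrib field_simps)
  finally have "a = (1 - 1 / (1 + l)) *\<^sub>R c + (1 / (1 + l)) *\<^sub>R b" .
  then show ?thesis
    using assms(2) unfolding in_segment by (intro exI[of _ "1 / (1 + l)"]) auto
qed

lemma strictly_convex_closed_segment_not_interior:
  assumes "strictly_convex T" "x \<in> T" "y \<in> T"
    and "z \<in> closed_segment x y" "z \<notin> interior T"
  shows "z = x \<or> z = y"
proof (rule ccontr)
  assume "\<not> (z = x \<or> z = y)"
  then have "z \<in> open_segment x y"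
    using assms(4) unfolding closed_segment_eq_open by blast
  then obtain t where "x \<noteq> y" "0 < t" "t < 1" "z = (1 - t) *\<^sub>R x + t *\<^sub>R y"
    unfolding in_segment(2) by blast
  then show False
    using assms unfolding strictly_convex_def by blast
qed

lemma mod_succ_pred: "j < (m::nat) \<Longrightarrow> ((j + m - 1) mod m + 1) mod m = j"
  using mod_Suc_eq by (cases j) auto

lemma mod_pred_succ: "j < (m::nat) \<Longrightarrow> ((j + 1) mod m + m - 1) mod m = j"
  by (cases "j + 1 < m") (auto simp: not_less_iff_gr_or_eq)

lemma closed_polygonal_on_strictly_convex_frontier:
  assumes "strictly_convex T" "closed T" "2 \<le> m"
    and on_frontier: "\<And>j. j < m \<Longrightarrow> p j \<in> frontier T"
    and distinct: "\<And>j. j < m \<Longrightarrow> p j \<noteq> p ((j + 1) mod m)"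
  shows "closed_polygonal m p"
  unfolding closed_polygonal_def
proof (intro conjI assms(3) allI impI)
  fix j assume j: "j < m"
  define i where "i = (j + m - 1) mod m"
  have "i < m" "(i + 1) mod m = j"
    using j mod_succ_pred[OF j] unfolding i_def by auto
  then have "p j \<noteq> p i"
    using distinct[OF \<open>i < m\<close>] by simp
  have "p i \<in> T" "p ((j + 1) mod m) \<in> T"
    using on_frontier \<open>i < m\<close> j frontier_subset_closed[OF assms(2)] by auto
  moreover have "p j \<notin> interior T"
    using on_frontier[OF j] by (simp add: frontier_def)
  ultimately have "p j \<notin> closed_segment (p i) (p ((j + 1) mod m))"
    using strictly_convex_closed_segment_not_interior[OF assms(1)] \<open>p j \<noteq> p i\<close> distinct[OF j]
    by metis
  then show "p j \<notin> closed_segment (p ((j + m - 1) mod m)) (p ((j + 1) mod m))"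
    unfolding i_def .
  show "p j \<noteq> p ((j + 1) mod m)"
    using distinct[OF j] .
qed

lemma dual_billiard_successor_distinct:
  fixes T :: "'a::euclidean_space set"
  assumes "smooth_body T" "interior T \<noteq> {}" "minkowski_billiard K T m q p" "j < m"
  shows "p j \<noteq> p ((j + 1) mod m)"
proof
  assume same: "p j = p ((j + 1) mod m)"
  define k where "k = (j + 1) mod m"
  have k: "k < m"
    using assms(4) unfolding k_def by simp
  have billiard: "\<And>i. i < m \<Longrightarrow> p i \<in> frontier T \<and> q ((i + 1) mod m) - q i \<in> normal_cone T (p i)"
    and polygonal: "\<And>i. i < m \<Longrightarrow> q i \<noteq> q ((i + 1) mod m) \<and>
                     q i \<notin> closed_segment (q ((i + m - 1) mod m)) (q ((i + 1) mod m))"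
    using assms(3) unfolding minkowski_billiard_def closed_polygonal_def by auto
  have edge: "q k - q j \<in> normal_cone T (p j)" "q k - q j \<noteq> 0"
    using billiard[OF assms(4)] polygonal[OF assms(4)] unfolding k_def by auto
  have next_edge: "q ((k + 1) mod m) - q k \<in> normal_cone T (p j)" "q ((k + 1) mod m) - q k \<noteq> 0"
    using billiard[OF k] polygonal[OF k] same unfolding k_def by auto
  obtain l where "l > 0" "q ((k + 1) mod m) - q k = l *\<^sub>R (q k - q j)"
    using smooth_body_normal_cone_ray[OF assms(1,2) _ next_edge edge] billiard[OF assms(4)] by blast
  then have "q k \<in> closed_segment (q j) (q ((k + 1) mod m))"
    by (intro in_closed_segment_if_continued) auto
  then show False
    using polygonal[OF k] mod_pred_succ[OF assms(4)] unfolding k_def by simp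
qed

lemma minkowski_billiard_dual:
  assumes "minkowski_billiard K T m q p" "closed_polygonal m p"
  shows "minkowski_billiard T (uminus ` K) m p (\<lambda>j. - q ((j + 1) mod m))"
  unfolding minkowski_billiard_def
proof (intro conjI assms(2) allI impI)
  fix j assume j: "j < m"
  have k: "(j + 1) mod m < m"
    using j by simp
  have billiard: "\<And>i. i < m \<Longrightarrow> q i \<in> frontier K \<and> p i \<in> frontier T \<and>
        q ((i + 1) mod m) - q i \<in> normal_cone T (p i) \<and>
        p ((i + 1) mod m) - p i \<in> uminus ` normal_cone K (q ((i + 1) mod m))"
    using assms(1) unfolding minkowski_billiard_def by auto
  show "p j \<in> frontier T"
    using billiard[OF j] by simp
  show "- q ((j + 1) mod m) \<in> frontier (uminus ` K)"
    using billiard[OF k] unfolding frontier_negations by simp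
  show "p ((j + 1) mod m) - p j \<in> normal_cone (uminus ` K) (- q ((j + 1) mod m))"
    using billiard[OF j] unfolding normal_cone_negations by simp
  have "q (((j + 1) mod m + 1) mod m) - q ((j + 1) mod m) \<in> normal_cone T (p ((j + 1) mod m))"
    using billiard[OF k] by simp
  then show "- q (((j + 1) mod m + 1) mod m) - - q ((j + 1) mod m)
      \<in> uminus ` normal_cone T (p ((j + 1) mod m))"
    by (intro image_eqI[of _ _ "q (((j + 1) mod m + 1) mod m) - q ((j + 1) mod m)"]) auto
qed

theorem proposition3p5:
  fixes K T :: "'a::euclidean_space set"
    and q p :: "nat \<Rightarrow> 'a" and m :: nat
  assumes "convex_body K" and "convex_body T"
    and "strictly_convex T" and "smooth_body T"
    and "minkowski_billiard K T m q p"
  shows "closed_polygonal m p \<and>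
         minkowski_billiard T (uminus ` K) m p (\<lambda>j. - q ((j + 1) mod m))"
proof -
  have "closed T" "interior T \<noteq> {}"
    using assms(2) unfolding convex_body_def by (auto simp: compact_imp_closed)
  moreover have "2 \<le> m" "\<And>j. j < m \<Longrightarrow> p j \<in> frontier T"
    using assms(5) unfolding minkowski_billiard_def closed_polygonal_def by auto
  ultimately have "closed_polygonal m p"
    using closed_polygonal_on_strictly_convex_frontier[OF assms(3)]
      dual_billiard_successor_distinct[OF assms(4) _ assms(5)] by blast
  then show ?thesis
    using minkowski_billiard_dual[OF assms(5)] by simp
qed

end
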